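(* Let $\mathcal{M}=(E,\mathcal{I})$ be a matroid with $E=\{e_1,\dots,e_n\}$, let $E_0$ be its set of loops, and let $E_1,\dots,E_k$ and $r_1,\dots,r_k$ be the ground sets and ranks of the principal minors of $\mathcal{M}\setminus E_0$. Let $\mathcal{P}$ be the partition matroid on $E$ whose independent sets are the sets $\bigcup_{i=1}^k I_i$ with $I_i\subseteq E_i$ and $|I_i|\leq r_i$. Let $w_1\geq\dots\geq w_n\geq 0$ and let $\sigma$ be a uniformly random permutation of $[n]$ defining weights $w(e_{\sigma(i)})=w_i$. Then $$\mathbb{E}_\sigma[w(\mathrm{OPT}_{\mathcal{P}}(\sigma))]\geq(1-1/e)\,\mathbb{E}_\sigma[w(\mathrm{OPT}_{\mathcal{M}}(\sigma))].$$
   Context: Principal sequence: for a loopless matroid $\mathcal{N}$ on ground set $S$ with rank function $r$, there are unique sets $\emptyset=F_0\subsetneq F_1\subsetneq\dots\subsetneq F_k=S$ and values $\infty>\lambda_1>\dots>\lambda_k\geq 1$ such that $\lambda_1,\dots,\lambda_k$ are exactly the values $\lambda$ for which $f_\lambda(X)=\lambda r(X)-|X|$ ($X\subseteq S$) has more than one minimizer, and the unique minimal and maximal minimizers of $f_{\lambda_i}$ are $F_{i-1}$ and $F_i$. The principal minors are $\mathcal{M}_i=(\mathcal{N}/F_{i-1})|_{E_i}$ with ground set $E_i=F_i\setminus F_{i-1}$ and rank $r_i$. For a matroid $\mathcal{Q}$ on $E$, $\mathrm{OPT}_{\mathcal{Q}}(\sigma)$ is the set produced by the greedy procedure (select an element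 if the selected set stays independent in $\mathcal{Q}$) on the sequence $e_{\sigma(1)},e_{\sigma(2)},\dots,e_{\sigma(n)}$. For $S\subseteq E$, $w(S)=\sum_{e\in S}w(e)$. *)

theory Defs
  imports "HOL-Probability.Probability" "HOL-Combinatorics.Permutations"
begin

definition matroid :: "'a set \<Rightarrow> ('a set \<Rightarrow> bool) \<Rightarrow> bool" where
  "matroid E indep \<longleftrightarrow>
     finite E \<and> (\<forall>I. indep I \<longrightarrow> I \<subseteq> E) \<and> indep {} \<and>
     (\<forall>I J. indep J \<and> I \<subseteq> J \<longrightarrow> indep I) \<and>
     (\<forall>I J. indep I \<and> indep J \<and> card I < card J \<longrightarrow> (\<exists>x\<in>J - I. indep (insert x I)))"

definition mrank :: "('a set \<Rightarrow> bool) \<Rightarrow> 'a set \<Rightarrow> nat" where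
  "mrank indep X = Max (card ` {I. I \<subseteq> X \<and> indep I})"

definition loops :: "'a set \<Rightarrow> ('a set \<Rightarrow> bool) \<Rightarrow> 'a set" where
  "loops E indep = {x \<in> E. \<not> indep {x}}"

definition indep_del :: "('a set \<Rightarrow> bool) \<Rightarrow> 'a set \<Rightarrow> 'a set \<Rightarrow> bool" where
  "indep_del indep D = (\<lambda>I. indep I \<and> I \<inter> D = {})"

definition fval :: "('a set \<Rightarrow> bool) \<Rightarrow> real \<Rightarrow> 'a set \<Rightarrow> real" where
  "fval indep lam X = lam * real (mrank indep X) - real (card X)"

definition minimizers :: "'a set \<Rightarrow> ('a set \<Rightarrow> bool) \<Rightarrow> real \<Rightarrow> 'a set set" where
  "minimizers S indep lam =
     {X. X \<subseteq> S \<and> (\<forall>Y. Y \<subseteq> S \<longrightarrow> fval indep lam X \<le> fval indep lam Y)}"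

definition principal_seq ::
  "'a set \<Rightarrow> ('a set \<Rightarrow> bool) \<Rightarrow> nat \<Rightarrow> (nat \<Rightarrow> 'a set) \<Rightarrow> (nat \<Rightarrow> real) \<Rightarrow> bool" where
  "principal_seq S indep k F lam \<longleftrightarrow>
     F 0 = {} \<and> F k = S \<and> (\<forall>i<k. F i \<subset> F (Suc i)) \<and>
     (\<forall>i. 1 \<le> i \<and> i < k \<longrightarrow> lam (Suc i) < lam i) \<and>
     (1 \<le> k \<longrightarrow> 1 \<le> lam k) \<and>
     {l. \<exists>X Y. X \<in> minimizers S indep l \<and> Y \<in> minimizers S indep l \<and> X \<noteq> Y}
        = lam ` {1..k} \<and>
     (\<forall>i\<in>{1..k}. F (i - 1) \<in> minimizers S indep (lam i) \<and> F i \<in> minimizers S indep (lam i) \<and>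
        (\<forall>X\<in>minimizers S indep (lam i). F (i - 1) \<subseteq> X \<and> X \<subseteq> F i))"

text \<open>Principal minor i: (N / F(i-1)) restricted to E_i = F i - F (i-1).
  Its rank is the contraction rank r(E_i \<union> F(i-1)) - r(F(i-1)).\<close>
definition pm_ground :: "(nat \<Rightarrow> 'a set) \<Rightarrow> nat \<Rightarrow> 'a set" where
  "pm_ground F i = F i - F (i - 1)"

definition contr_rank :: "('a set \<Rightarrow> bool) \<Rightarrow> 'a set \<Rightarrow> 'a set \<Rightarrow> nat" where
  "contr_rank indep C X = mrank indep (X \<union> C) - mrank indep C"

definition pm_rank :: "('a set \<Rightarrow> bool) \<Rightarrow> (nat \<Rightarrow> 'a set) \<Rightarrow> nat \<Rightarrow> nat" where
  "pm_rank indep F i = contr_rank indep (F (i - 1)) (pm_ground F i)"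

definition partition_indep ::
  "'a set \<Rightarrow> nat \<Rightarrow> (nat \<Rightarrow> 'a set) \<Rightarrow> (nat \<Rightarrow> nat) \<Rightarrow> 'a set \<Rightarrow> bool" where
  "partition_indep E k Es rs I \<longleftrightarrow>
     I \<subseteq> E \<and> I \<subseteq> (\<Union>i\<in>{1..k}. Es i) \<and> (\<forall>i\<in>{1..k}. card (I \<inter> Es i) \<le> rs i)"

fun greedy :: "('a set \<Rightarrow> bool) \<Rightarrow> (nat \<Rightarrow> 'a) \<Rightarrow> nat \<Rightarrow> 'a set" where
  "greedy indep s 0 = {}"
| "greedy indep s (Suc m) =
     (let A = greedy indep s m in
      if indep (insert (s (Suc m)) A) then insert (s (Suc m)) A else A)"

definition setw :: "nat \<Rightarrow> (nat \<Rightarrow> real) \<Rightarrow> (nat \<Rightarrow> 'a) \<Rightarrow> (nat \<Rightarrow> nat) \<Rightarrow> 'a set \<Rightarrow> real" where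
  "setw n w e \<sigma> A = (\<Sum>i\<in>{1..n}. if e (\<sigma> i) \<in> A then w i else 0)"

end

theory Submission
  imports Defs
begin

text \<open>Fix a prefix length \<open>m\<close> and let \<open>T\<close> be the set of the first \<open>m\<close> elements of the random
  order, so that every element lies in \<open>T\<close> with probability \<open>p = m / n\<close>. Greedy on a matroid keeps
  \<open>r(T)\<close> of them, greedy on the partition matroid keeps \<open>\<Sum>i. min r\<^sub>i |T \<inter> E\<^sub>i|\<close>. Since the
  densities \<open>\<lambda>\<^sub>i = |E\<^sub>i| / r\<^sub>i\<close> of the principal minors decrease, the blocks with
  \<open>r\<^sub>i \<le> p |E\<^sub>i|\<close> form an initial segment \<open>i \<le> j\<close>, and bounding \<open>r(T)\<close> by
  \<open>r(F\<^sub>j) + |T - F\<^sub>j|\<close> shows that the expectation of \<open>r(T)\<close> is at most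
  \<open>\<Sum>i. min r\<^sub>i (p |E\<^sub>i|)\<close>. On the other side the events \<open>x \<in> T\<close> are negatively
  correlated, which bounds the expectation of \<open>min r |T \<inter> B|\<close> from below by
  \<open>r (1 - (1 - p/r)^|B|) \<ge> (1 - 1/e) min r (p |B|)\<close>. So the expected
  number of elements the partition greedy keeps among the first \<open>m\<close> is at least \<open>1 - 1/e\<close> times
  that of the matroid greedy, for every \<open>m\<close>; summation by parts against the non-increasing
  weights turns these prefix inequalities into the claim.\<close>

lemma Chebyshev_sum_comonotone:
  fixes f g :: "'b \<Rightarrow> real"
  assumes "finite A" and "\<And>x y. x \<in> A \<Longrightarrow> y \<in> A \<Longrightarrow> 0 \<le> (f x - f y) * (g x - g y)"
  shows "(\<Sum>x\<in>A. f x) * (\<Sum>x\<in>A. g x) \<le> real (card A) * (\<Sum>x\<in>A. f x * g x)"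
proof -
  let ?S = "\<Sum>x\<in>A. \<Sum>y\<in>A. (f x - f y) * (g x - g y)"
  have "2 * (real (card A) * (\<Sum>x\<in>A. f x * g x) - (\<Sum>x\<in>A. f x) * (\<Sum>x\<in>A. g x)) = ?S"
    by (simp only: one_add_one[symmetric] algebra_simps)
      (simp add: algebra_simps sum_subtractf sum.distrib sum.swap[of "\<lambda>i j. f i * g j"]
        sum_distrib_left sum_distrib_right)
  moreover have "0 \<le> ?S" using assms by (intro sum_nonneg) auto
  ultimately show ?thesis by simp
qed

lemma sum_if_mem_eq_card:
  "finite A \<Longrightarrow> (\<Sum>v\<in>A. if v \<in> X then 1 else 0) = real (card (A \<inter> X))"
  by (simp add: sum.If_cases Int_commute)

abbreviation perms_upto :: "nat \<Rightarrow> (nat \<Rightarrow> nat) set" where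
  "perms_upto n \<equiv> {\<sigma>. \<sigma> permutes {1..n}}"

lemma finite_perms_upto: "finite (perms_upto n)"
  by (rule finite_permutations) simp

lemma perms_upto_nonempty: "perms_upto n \<noteq> {}"
  using permutes_id[of "{1..n}"] by blast

lemma card_perms_upto_pos: "0 < card (perms_upto n)"
  using finite_perms_upto perms_upto_nonempty by (simp add: card_gt_0_iff)

lemma permutes_prefix_image:
  assumes "\<sigma> permutes {1..n}" "m \<le> n"
  shows "\<sigma> ` {1..m} \<subseteq> {1..n}" "card (\<sigma> ` {1..m}) = m"
  using assms permutes_image[OF assms(1)] card_image[OF permutes_inj_on[OF assms(1)]] by auto

text \<open>Composing with the transposition of \<open>u\<close> and \<open>v\<close>, which fixes \<open>B\<close> setwise, is a bijection
  of the permutations exchanging the two events.\<close>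

lemma count_perms_upto_transpose:
  assumes "u \<in> {1..n}" "v \<in> {1..n}" "u \<notin> B" "v \<notin> B"
  shows "(\<Sum>\<sigma>\<in>perms_upto n. if u \<in> \<sigma> ` M \<and> Q (card (\<sigma> ` M \<inter> B)) then 1 else 0)
       = (\<Sum>\<sigma>\<in>perms_upto n. if v \<in> \<sigma> ` M \<and> Q (card (\<sigma> ` M \<inter> B)) then (1::real) else 0)"
proof -
  let ?t = "Transposition.transpose u v"
  have swap: "(u \<in> (?t \<circ> \<sigma>) ` M \<and> Q (card ((?t \<circ> \<sigma>) ` M \<inter> B)))
      \<longleftrightarrow> (v \<in> \<sigma> ` M \<and> Q (card (\<sigma> ` M \<inter> B)))" for \<sigma>
  proof -
    have "?t ` B = B" using assms(3,4) by simp
    then have "(?t \<circ> \<sigma>) ` M \<inter> B = ?t ` (\<sigma> ` M) \<inter> ?t ` B"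
      by (simp add: image_comp)
    then have "(?t \<circ> \<sigma>) ` M \<inter> B = ?t ` (\<sigma> ` M \<inter> B)"
      by (simp add: image_Int)
    then have "card ((?t \<circ> \<sigma>) ` M \<inter> B) = card (\<sigma> ` M \<inter> B)"
      by (simp add: card_image)
    moreover have "u \<in> (?t \<circ> \<sigma>) ` M \<longleftrightarrow> v \<in> \<sigma> ` M"
      unfolding image_comp[symmetric] in_transpose_image_iff by simp
    ultimately show ?thesis by simp
  qed
  show ?thesis
    by (subst setum_permutations_compose_left[OF permutes_swap_id[OF assms(1,2)]]) (simp only: swap)
qed

lemma count_perms_upto_mem_prefix:
  assumes "u \<in> {1..n}" "m \<le> n"
  shows "(\<Sum>\<sigma>\<in>perms_upto n. if u \<in> \<sigma> ` {1..m} then 1 else 0)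
       = real m * real (card (perms_upto n)) / real n"
proof -
  define V where "V v = (\<Sum>\<sigma>\<in>perms_upto n. if v \<in> \<sigma> ` {1..m} then 1 else (0::real))" for v
  have "V v = V u" if "v \<in> {1..n}" for v
    using count_perms_upto_transpose[OF that assms(1), of "{}" "{1..m}" "\<lambda>_. True"] by (simp add: V_def)
  then have "real n * V u = (\<Sum>v\<in>{1..n}. V v)" by simp
  also have "\<dots> = (\<Sum>\<sigma>\<in>perms_upto n. \<Sum>v\<in>{1..n}. if v \<in> \<sigma> ` {1..m} then 1 else (0::real))"
    unfolding V_def by (rule sum.swap)
  also have "\<dots> = (\<Sum>\<sigma>\<in>perms_upto n. real m)"
  proof (rule sum.cong[OF refl])
    fix \<sigma> assume "\<sigma> \<in> perms_upto n"
    with permutes_prefix_image[OF _ assms(2)] have "{1..n} \<inter> \<sigma> ` {1..m} = \<sigma> ` {1..m}" "card (\<sigma> ` {1..m}) = m"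
      by auto
    then show "(\<Sum>v\<in>{1..n}. if v \<in> \<sigma> ` {1..m} then 1 else (0::real)) = real m"
      by (simp add: sum_if_mem_eq_card)
  qed
  finally show ?thesis using assms(1) unfolding V_def by (simp add: field_simps)
qed

lemma sum_perms_upto_card_prefix_inter:
  assumes "B \<subseteq> {1..n}" "m \<le> n"
  shows "(\<Sum>\<sigma>\<in>perms_upto n. real (card (\<sigma> ` {1..m} \<inter> B)))
       = real (card B) * real m * real (card (perms_upto n)) / real n"
proof -
  have "finite B" using assms(1) finite_subset by blast
  then have "(\<Sum>\<sigma>\<in>perms_upto n. real (card (\<sigma> ` {1..m} \<inter> B)))
      = (\<Sum>\<sigma>\<in>perms_upto n. \<Sum>b\<in>B. if b \<in> \<sigma> ` {1..m} then 1 else 0)"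
    by (simp add: sum_if_mem_eq_card Int_commute)
  also have "\<dots> = (\<Sum>b\<in>B. \<Sum>\<sigma>\<in>perms_upto n. if b \<in> \<sigma> ` {1..m} then 1 else 0)"
    by (rule sum.swap)
  also have "\<dots> = (\<Sum>b\<in>B. real m * real (card (perms_upto n)) / real n)"
    using count_perms_upto_mem_prefix assms by (intro sum.cong) auto
  finally show ?thesis by simp
qed

text \<open>Negative correlation: given that the random prefix meets \<open>B\<close> in at least \<open>r\<close> elements, an
  element outside \<open>B\<close> is less likely to lie in it. Averaging over the elements outside \<open>B\<close> reduces
  this to Chebyshev's inequality for the comonotone functions \<open>[r \<le> Y]\<close> and \<open>Y\<close>.\<close>

lemma count_perms_upto_mem_prefix_and_large_le:
  assumes "a \<in> {1..n}" "a \<notin> B" "B \<subseteq> {1..n}" "m \<le> n"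
  shows "(\<Sum>\<sigma>\<in>perms_upto n. if a \<in> \<sigma> ` {1..m} \<and> r \<le> card (\<sigma> ` {1..m} \<inter> B) then 1 else 0)
       \<le> real m / real n * (\<Sum>\<sigma>\<in>perms_upto n. if r \<le> card (\<sigma> ` {1..m} \<inter> B) then 1 else (0::real))"
proof -
  define C where "C = {1..n} - B"
  define Y where "Y \<sigma> = card (\<sigma> ` {1..m} \<inter> B)" for \<sigma>
  define large where "large \<sigma> = (if r \<le> Y \<sigma> then 1 else (0::real))" for \<sigma>
  define Z where "Z = (\<Sum>\<sigma>\<in>perms_upto n. if a \<in> \<sigma> ` {1..m} \<and> r \<le> Y \<sigma> then 1 else (0::real))"
  define Q where "Q = (\<Sum>\<sigma>\<in>perms_upto n. large \<sigma>)"
  define P where "P = real (card (perms_upto n))"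
  have "card B \<le> n" using card_mono[OF _ assms(3)] by simp
  then have card_C: "real (card C) = real n - real (card B)"
    using card_Diff_subset[OF finite_subset[OF assms(3)] assms(3)] by (simp add: C_def of_nat_diff)
  have "0 < card C" using assms(1,2) by (auto simp: C_def card_gt_0_iff)
  have "real (card C) * Z
      = (\<Sum>c\<in>C. \<Sum>\<sigma>\<in>perms_upto n. if c \<in> \<sigma> ` {1..m} \<and> r \<le> Y \<sigma> then 1 else (0::real))"
    using count_perms_upto_transpose[OF _ assms(1) _ assms(2), of _ "{1..m}" "\<lambda>y. r \<le> y"]
    by (simp add: Z_def Y_def C_def)
  also have "\<dots> = (\<Sum>\<sigma>\<in>perms_upto n. \<Sum>c\<in>C. if c \<in> \<sigma> ` {1..m} \<and> r \<le> Y \<sigma> then 1 else (0::real))"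
    by (rule sum.swap)
  also have "\<dots> = (\<Sum>\<sigma>\<in>perms_upto n. large \<sigma> * (real m - real (Y \<sigma>)))"
  proof (rule sum.cong[OF refl])
    fix \<sigma> assume "\<sigma> \<in> perms_upto n"
    with permutes_prefix_image[OF _ assms(4)]
    have T: "\<sigma> ` {1..m} \<subseteq> {1..n}" "card (\<sigma> ` {1..m}) = m" by auto
    then have "C \<inter> \<sigma> ` {1..m} = \<sigma> ` {1..m} - (\<sigma> ` {1..m} \<inter> B)" by (auto simp: C_def)
    moreover have "Y \<sigma> \<le> m" using T card_mono[of "\<sigma> ` {1..m}" "\<sigma> ` {1..m} \<inter> B"] by (simp add: Y_def)
    ultimately have "real (card (C \<inter> \<sigma> ` {1..m})) = real m - real (Y \<sigma>)"
      using T by (simp add: card_Diff_subset Y_def of_nat_diff)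
    then show "(\<Sum>c\<in>C. if c \<in> \<sigma> ` {1..m} \<and> r \<le> Y \<sigma> then 1 else (0::real))
        = large \<sigma> * (real m - real (Y \<sigma>))"
      using sum_if_mem_eq_card[of C "\<sigma> ` {1..m}"] by (simp add: C_def large_def)
  qed
  also have "\<dots> = real m * Q - (\<Sum>\<sigma>\<in>perms_upto n. large \<sigma> * real (Y \<sigma>))"
    by (simp add: Q_def algebra_simps sum_subtractf sum_distrib_left)
  finally have Z_eq: "real (card C) * Z = real m * Q - (\<Sum>\<sigma>\<in>perms_upto n. large \<sigma> * real (Y \<sigma>))" .
  have "P * (Q * real (card B) * real m / real n) = Q * (\<Sum>\<sigma>\<in>perms_upto n. real (Y \<sigma>))"
    using sum_perms_upto_card_prefix_inter[OF assms(3,4)] by (simp add: Y_def P_def)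
  also have "\<dots> \<le> P * (\<Sum>\<sigma>\<in>perms_upto n. large \<sigma> * real (Y \<sigma>))"
    unfolding Q_def P_def by (rule Chebyshev_sum_comonotone[OF finite_perms_upto]) (auto simp: large_def)
  finally have "Q * real (card B) * real m / real n \<le> (\<Sum>\<sigma>\<in>perms_upto n. large \<sigma> * real (Y \<sigma>))"
    by (rule mult_left_le_imp_le) (use card_perms_upto_pos in \<open>simp add: P_def\<close>)
  with Z_eq have "real (card C) * Z \<le> real m * Q - Q * real (card B) * real m / real n"
    by linarith
  also have "\<dots> = real (card C) * (real m / real n * Q)"
    using assms(1) by (simp add: card_C field_simps)
  finally have "Z \<le> real m / real n * Q"
    by (rule mult_left_le_imp_le) (use \<open>0 < card C\<close> in simp)
  then show ?thesis by (simp add: Z_def Q_def Y_def large_def)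
qed

lemma one_minus_exp_mult_min_le:
  fixes x :: real
  assumes "0 \<le> x"
  shows "(1 - exp (-1)) * min 1 x \<le> 1 - exp (- x)"
proof (cases "x \<le> 1")
  case True
  have "exp ((1 - x) *\<^sub>R 0 + x *\<^sub>R (-1)) \<le> (1 - x) * exp 0 + x * exp (-1)"
    by (rule convex_onD[OF exp_convex]) (use True assms in auto)
  then show ?thesis using True by (simp add: algebra_simps)
qed simp

lemma one_minus_exp_mult_min_le_power:
  fixes r p :: real
  assumes "1 \<le> r" "0 \<le> p" "p \<le> 1"
  shows "(1 - exp (-1)) * min r (p * real K) \<le> r * (1 - (1 - p / r) ^ K)"
proof -
  have "(1 - p / r) ^ K \<le> exp (- (p / r)) ^ K"
    using assms exp_ge_add_one_self[of "- (p / r)"] by (intro power_mono) auto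
  also have "\<dots> = exp (- (p * real K / r))"
    by (simp add: exp_of_nat_mult[symmetric] algebra_simps)
  finally have power_le: "(1 - p / r) ^ K \<le> exp (- (p * real K / r))" .
  have "(1 - exp (-1)) * min r (p * real K) = r * ((1 - exp (-1)) * min 1 (p * real K / r))"
    using assms by (simp add: min_def field_simps)
  also have "\<dots> \<le> r * (1 - exp (- (p * real K / r)))"
    using assms by (intro mult_left_mono one_minus_exp_mult_min_le) simp_all
  also have "\<dots> \<le> r * (1 - (1 - p / r) ^ K)" using power_le assms by simp
  finally show ?thesis .
qed

text \<open>Adding an element \<open>a\<close> to \<open>B\<close> raises the sum by \<open>p P\<close>, minus the number of permutations
  whose prefix contains \<open>a\<close> and already meets \<open>B\<close> in \<open>r\<close> elements. Bounding the latter by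
  negative correlation gives the recursion \<open>S (insert a B) \<ge> (1 - p/r) S B + p P\<close>, whose
  solution is the bound.\<close>

lemma sum_perms_upto_min_card_prefix_inter_ge:
  assumes "B \<subseteq> {1..n}" "m \<le> n" "1 \<le> r"
  shows "real (card (perms_upto n)) * real r * (1 - (1 - real m / real n / real r) ^ card B)
     \<le> (\<Sum>\<sigma>\<in>perms_upto n. real (min r (card (\<sigma> ` {1..m} \<inter> B))))"
proof -
  define P where "P = real (card (perms_upto n))"
  define p where "p = real m / real n"
  define q where "q = 1 - p / real r"
  have "0 \<le> p" "p \<le> 1" using assms(2) by (auto simp: p_def divide_le_eq_1)
  have "0 \<le> q" using \<open>p \<le> 1\<close> assms(3) by (simp add: q_def field_simps)
  have "finite B" using assms(1) finite_subset by blast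
  then show ?thesis
    unfolding P_def[symmetric] p_def[symmetric] q_def[symmetric]
    using assms(1)
  proof (induction B rule: finite_subset_induct')
    case (insert a B)
    define Y where "Y \<sigma> = card (\<sigma> ` {1..m} \<inter> B)" for \<sigma>
    define S where "S = (\<Sum>\<sigma>\<in>perms_upto n. real (min r (Y \<sigma>)))"
    define Q where "Q = (\<Sum>\<sigma>\<in>perms_upto n. if r \<le> Y \<sigma> then 1 else (0::real))"
    define A where "A = (\<Sum>\<sigma>\<in>perms_upto n. if a \<in> \<sigma> ` {1..m} then 1 else (0::real))"
    define A' where "A' = (\<Sum>\<sigma>\<in>perms_upto n. if a \<in> \<sigma> ` {1..m} \<and> r \<le> Y \<sigma> then 1 else (0::real))"
    have "finite B" using insert by simp
    have "real (min r (card (\<sigma> ` {1..m} \<inter> insert a B))) = real (min r (Y \<sigma>))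
        + ((if a \<in> \<sigma> ` {1..m} then 1 else 0) - (if a \<in> \<sigma> ` {1..m} \<and> r \<le> Y \<sigma> then 1 else 0))" for \<sigma>
    proof (cases "a \<in> \<sigma> ` {1..m}")
      case True
      then have "\<sigma> ` {1..m} \<inter> insert a B = insert a (\<sigma> ` {1..m} \<inter> B)" by auto
      then have "card (\<sigma> ` {1..m} \<inter> insert a B) = Suc (Y \<sigma>)"
        using insert(4) \<open>finite B\<close> by (simp add: Y_def)
      then show ?thesis using True by auto
    next
      case False
      then have "\<sigma> ` {1..m} \<inter> insert a B = \<sigma> ` {1..m} \<inter> B" by auto
      then show ?thesis using False by (simp add: Y_def)
    qed
    then have step: "(\<Sum>\<sigma>\<in>perms_upto n. real (min r (card (\<sigma> ` {1..m} \<inter> insert a B))))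
        = S + (A - A')"
      by (simp add: S_def A_def A'_def sum.distrib sum_subtractf)
    have "A = p * P" using count_perms_upto_mem_prefix[OF insert(2) assms(2)] by (simp add: A_def p_def P_def)
    moreover have "A' \<le> p * Q" unfolding A'_def Q_def p_def Y_def
      by (rule count_perms_upto_mem_prefix_and_large_le[OF insert(2) insert(4) insert(3) assms(2)])
    moreover have "real r * Q \<le> S" unfolding Q_def S_def sum_distrib_left
      by (rule sum_mono) auto
    then have "p * (real r * Q) \<le> p * S" using \<open>0 \<le> p\<close> by (rule mult_left_mono)
    then have "p * Q \<le> p * S / real r" using assms(3) by (simp add: field_simps mult_ac)
    ultimately have "q * S + p * P \<le> S + (A - A')" by (simp add: q_def algebra_simps)
    moreover have "q * (P * real r * (1 - q ^ card B)) \<le> q * S"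
      using insert(5) \<open>0 \<le> q\<close> by (intro mult_left_mono) (simp_all add: S_def Y_def)
    moreover have "q * (P * real r * (1 - q ^ card B)) + p * P = P * real r * (1 - q ^ card (insert a B))"
      using insert(4) \<open>finite B\<close> assms(3) by (simp add: q_def field_simps)
    ultimately show ?case using step by linarith
  qed simp
qed

lemma sum_antimono_weights_increments_nonneg:
  fixes w d :: "nat \<Rightarrow> real"
  assumes antimono: "\<And>i j. 1 \<le> i \<Longrightarrow> i \<le> j \<Longrightarrow> j \<le> n \<Longrightarrow> w j \<le> w i"
    and w_nonneg: "\<And>i. i \<in> {1..n} \<Longrightarrow> 0 \<le> w i"
    and "d 0 = 0" and d_nonneg: "\<And>i. i \<in> {1..n} \<Longrightarrow> 0 \<le> d i"
  shows "0 \<le> (\<Sum>i\<in>{1..n}. w i * (d i - d (i - 1)))"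
proof -
  have "m \<le> n \<Longrightarrow> w m * d m \<le> (\<Sum>i\<in>{1..m}. w i * (d i - d (i - 1)))" for m
  proof (induction m)
    case (Suc m)
    have "w (Suc m) * d m \<le> w m * d m"
      using Suc.prems \<open>d 0 = 0\<close> antimono[of m "Suc m"] d_nonneg[of m]
      by (cases "m = 0") (auto intro: mult_right_mono)
    then show ?case using Suc by (simp add: algebra_simps)
  qed (simp add: \<open>d 0 = 0\<close>)
  moreover have "0 \<le> w n * d n"
    using w_nonneg[of n] d_nonneg[of n] \<open>d 0 = 0\<close> by (cases "n = 0") auto
  ultimately show ?thesis by fastforce
qed

lemma sum_antimono_weights_increments_mono:
  fixes w a b :: "nat \<Rightarrow> real"
  assumes "\<And>i j. 1 \<le> i \<Longrightarrow> i \<le> j \<Longrightarrow> j \<le> n \<Longrightarrow> w j \<le> w i"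
    and "\<And>i. i \<in> {1..n} \<Longrightarrow> 0 \<le> w i"
    and "a 0 = 0" "b 0 = 0" and "\<And>i. i \<in> {1..n} \<Longrightarrow> c * a i \<le> b i"
  shows "c * (\<Sum>i\<in>{1..n}. w i * (a i - a (i - 1))) \<le> (\<Sum>i\<in>{1..n}. w i * (b i - b (i - 1)))"
proof -
  have "0 \<le> (\<Sum>i\<in>{1..n}. w i * ((b i - c * a i) - (b (i - 1) - c * a (i - 1))))"
    using assms by (intro sum_antimono_weights_increments_nonneg) auto
  also have "\<dots> = (\<Sum>i\<in>{1..n}. w i * (b i - b (i - 1)) - c * (w i * (a i - a (i - 1))))"
    by (simp add: algebra_simps)
  also have "\<dots> = (\<Sum>i\<in>{1..n}. w i * (b i - b (i - 1))) - c * (\<Sum>i\<in>{1..n}. w i * (a i - a (i - 1)))"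
    by (simp only: sum_subtractf sum_distrib_left)
  finally show ?thesis by simp
qed

lemma greedy_Suc_cases:
  "greedy P s (Suc m) = greedy P s m \<or> greedy P s (Suc m) = insert (s (Suc m)) (greedy P s m)"
  by (simp add: Let_def)

lemma greedy_subset_image: "greedy P s m \<subseteq> s ` {1..m}"
proof (induction m)
  case (Suc m)
  have "s ` {1..Suc m} = insert (s (Suc m)) (s ` {1..m})" by (auto simp: atLeastAtMostSuc_conv)
  with Suc.IH greedy_Suc_cases[of P s m] show ?case by blast
qed simp

lemma greedy_satisfies: "P {} \<Longrightarrow> P (greedy P s m)"
  by (induction m) (auto simp: Let_def)

lemma mem_greedy_iff_mem_greedy_at:
  assumes "inj_on s {1..j}" "1 \<le> i" "i \<le> j"
  shows "s i \<in> greedy P s j \<longleftrightarrow> s i \<in> greedy P s i"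
  using assms
proof (induction j)
  case (Suc j)
  show ?case
  proof (cases "i = Suc j")
    case False
    then have "i \<le> j" using Suc.prems by simp
    have "s i \<noteq> s (Suc j)"
      using inj_onD[OF Suc.prems(1), of i "Suc j"] \<open>i \<le> j\<close> Suc.prems(2) by auto
    then have "s i \<in> greedy P s (Suc j) \<longleftrightarrow> s i \<in> greedy P s j"
      using greedy_Suc_cases[of P s j] by auto
    moreover have "inj_on s {1..j}" using Suc.prems(1) by (rule inj_on_subset) auto
    ultimately show ?thesis using Suc.IH Suc.prems(2) \<open>i \<le> j\<close> by simp
  qed simp
qed simp

lemma indicator_mem_greedy:
  assumes "inj_on s {1..n}" "i \<in> {1..n}"
  shows "(if s i \<in> greedy P s n then 1 else 0)
       = real (card (greedy P s i)) - real (card (greedy P s (i - 1)))"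
proof -
  obtain j where i: "i = Suc j" using assms(2) by (cases i) auto
  have "s i \<notin> s ` {1..j}"
    using inj_on_image_mem_iff[OF assms(1), of i "{1..j}"] assms(2) i by simp
  then have "s i \<notin> greedy P s j" using greedy_subset_image[of P s j] by blast
  moreover have "finite (greedy P s j)" using finite_subset[OF greedy_subset_image] by simp
  moreover have "s i \<in> greedy P s n \<longleftrightarrow> s i \<in> greedy P s i"
    using mem_greedy_iff_mem_greedy_at[OF assms(1)] assms(2) by simp
  moreover have "greedy P s i = greedy P s j \<or> greedy P s i = insert (s i) (greedy P s j)"
    using greedy_Suc_cases[of P s j] by (simp only: i)
  moreover have "i - 1 = j" using i by simp
  ultimately show ?thesis by (elim disjE) (simp_all del: greedy.simps)
qed

lemma setw_greedy_eq_sum_increments: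
  assumes "\<sigma> permutes {1..n}" "inj_on e {1..n}"
  shows "setw n w e \<sigma> (greedy P (e \<circ> \<sigma>) n) =
    (\<Sum>i\<in>{1..n}. w i * (real (card (greedy P (e \<circ> \<sigma>) i)) - real (card (greedy P (e \<circ> \<sigma>) (i - 1)))))"
proof -
  have "inj_on (e \<circ> \<sigma>) {1..n}"
    using assms permutes_inj_on[OF assms(1)] permutes_image[OF assms(1)] by (intro comp_inj_on) auto
  show ?thesis unfolding setw_def
  proof (rule sum.cong[OF refl])
    fix i assume "i \<in> {1..n}"
    from indicator_mem_greedy[OF \<open>inj_on (e \<circ> \<sigma>) {1..n}\<close> this, of P]
    show "(if e (\<sigma> i) \<in> greedy P (e \<circ> \<sigma>) n then w i else 0) = w i *
        (real (card (greedy P (e \<circ> \<sigma>) i)) - real (card (greedy P (e \<circ> \<sigma>) (i - 1))))"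
      by (auto split: if_splits)
  qed
qed

locale finite_matroid =
  fixes E :: "'a set" and indep :: "'a set \<Rightarrow> bool"
  assumes matroid: "matroid E indep"
begin

lemma finite_ground: "finite E"
  using matroid by (simp add: matroid_def)

lemma indep_subset_ground: "indep I \<Longrightarrow> I \<subseteq> E"
  using matroid by (simp add: matroid_def)

lemma indep_finite: "indep I \<Longrightarrow> finite I"
  using finite_subset[OF indep_subset_ground finite_ground] .

lemma indep_empty: "indep {}"
  using matroid by (simp add: matroid_def)

lemma indep_subset: "indep J \<Longrightarrow> I \<subseteq> J \<Longrightarrow> indep I"
  using matroid unfolding matroid_def by blast

lemma indep_augment: "indep I \<Longrightarrow> indep J \<Longrightarrow> card I < card J \<Longrightarrow> \<exists>x\<in>J - I. indep (insert x I)"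
  using matroid unfolding matroid_def by blast

lemma finite_indep_subsets: "finite {I. I \<subseteq> X \<and> indep I}"
proof (rule finite_subset)
  show "{I. I \<subseteq> X \<and> indep I} \<subseteq> Pow E" using indep_subset_ground by auto
qed (simp add: finite_ground)

lemma card_le_mrank: "I \<subseteq> X \<Longrightarrow> indep I \<Longrightarrow> card I \<le> mrank indep X"
  unfolding mrank_def using finite_indep_subsets by (intro Max_ge) auto

lemma obtain_basis:
  obtains I where "I \<subseteq> X" "indep I" "card I = mrank indep X"
proof -
  have "mrank indep X \<in> card ` {I. I \<subseteq> X \<and> indep I}"
    unfolding mrank_def using finite_indep_subsets indep_empty by (intro Max_in) auto
  then show ?thesis using that by auto
qed

lemma mrank_empty: "mrank indep {} = 0"
proof -
  obtain I where "I \<subseteq> {}" "indep I" "card I = mrank indep {}" by (rule obtain_basis)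
  then show ?thesis by simp
qed

lemma mrank_mono:
  assumes "X \<subseteq> Y"
  shows "mrank indep X \<le> mrank indep Y"
proof -
  obtain I where I: "I \<subseteq> X" "indep I" "card I = mrank indep X" by (rule obtain_basis)
  have "card I \<le> mrank indep Y" using I(1,2) assms by (intro card_le_mrank) auto
  with I(3) show ?thesis by simp
qed

lemma mrank_le_mrank_add_card_diff:
  assumes "finite X"
  shows "mrank indep X \<le> mrank indep Y + card (X - Y)"
proof -
  obtain I where I: "I \<subseteq> X" "indep I" "card I = mrank indep X" by (rule obtain_basis)
  have "card I = card (I \<inter> Y) + card (I - Y)"
    using indep_finite[OF I(2)] by (metis card_Int_Diff)
  also have "card (I \<inter> Y) \<le> mrank indep Y"
    using I by (intro card_le_mrank) (auto intro: indep_subset)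
  also have "card (I - Y) \<le> card (X - Y)" using I assms by (intro card_mono) auto
  finally show ?thesis using I by simp
qed

lemma indep_disjoint_loops: "indep I \<Longrightarrow> I \<inter> loops E indep = {}"
  using indep_subset by (fastforce simp: loops_def)

lemma indep_del_loops: "indep_del indep (loops E indep) = indep"
  using indep_disjoint_loops by (auto simp: indep_del_def fun_eq_iff)

lemma mrank_diff_loops: "mrank indep (X - loops E indep) = mrank indep X"
proof -
  have "{I. I \<subseteq> X - loops E indep \<and> indep I} = {I. I \<subseteq> X \<and> indep I}"
    using indep_disjoint_loops by blast
  then show ?thesis by (simp add: mrank_def)
qed

text \<open>If the greedy set were smaller than a basis of the elements seen so far, it could be augmented
  from that basis by an element that greedy had already seen and rejected.\<close>

lemma card_greedy_eq_mrank: "card (greedy indep s m) = mrank indep (s ` {1..m})"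
proof (induction m)
  case 0
  then show ?case using mrank_empty by simp
next
  case (Suc m)
  define G where "G = greedy indep s m"
  define T where "T = s ` {1..m}"
  define x where "x = s (Suc m)"
  define G' where "G' = greedy indep s (Suc m)"
  have G': "G' = (if indep (insert x G) then insert x G else G)"
    by (simp add: G'_def G_def x_def Let_def)
  have "s ` {1..Suc m} = insert x T" by (auto simp: T_def x_def atLeastAtMostSuc_conv)
  have G: "G \<subseteq> T" "indep G" "card G = mrank indep T"
    using Suc.IH greedy_subset_image[of indep s m] greedy_satisfies[of indep s m, OF indep_empty]
    by (simp_all add: G_def T_def)
  have "G' \<subseteq> insert x T" "indep G'" using G by (auto simp: G')
  then have "card G' \<le> mrank indep (insert x T)" by (rule card_le_mrank)
  moreover have "mrank indep (insert x T) \<le> card G'"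
  proof (rule ccontr)
    assume "\<not> ?thesis"
    obtain J where J: "J \<subseteq> insert x T" "indep J" "card J = mrank indep (insert x T)"
      by (rule obtain_basis)
    with \<open>\<not> ?thesis\<close> obtain y where y: "y \<in> J - G'" "indep (insert y G')"
      using indep_augment[OF \<open>indep G'\<close> J(2)] by auto
    have "G \<subseteq> G'" by (simp add: G' subset_insertI)
    with y have "y \<notin> G" by blast
    have "indep (insert y G)" using indep_subset[OF y(2)] \<open>G \<subseteq> G'\<close> by blast
    have "y \<noteq> x"
    proof
      assume "y = x"
      with \<open>indep (insert y G)\<close> have "x \<in> G'" by (simp add: G')
      with y \<open>y = x\<close> show False by simp
    qed
    with y J have "y \<in> T" by blast
    with G(1) have "insert y G \<subseteq> T" by blast
    then have "card (insert y G) \<le> card G"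
      using card_le_mrank[OF _ \<open>indep (insert y G)\<close>] G(3) by simp
    then show False using \<open>y \<notin> G\<close> indep_finite[OF G(2)] by simp
  qed
  ultimately show ?case using \<open>s ` {1..Suc m} = insert x T\<close> by (simp add: G'_def)
qed

end

lemma partition_indep_insert_iff:
  assumes disj: "disjoint_family_on Es {1..k}"
    and G: "partition_indep E k Es rs G" "finite G"
    and x: "x \<in> E" "x \<notin> G" "i \<in> {1..k}" "x \<in> Es i"
  shows "partition_indep E k Es rs (insert x G) \<longleftrightarrow> card (G \<inter> Es i) < rs i"
proof -
  have other: "insert x G \<inter> Es j = G \<inter> Es j" if "j \<in> {1..k}" "j \<noteq> i" for j
    using disj x(3,4) that unfolding disjoint_family_on_def by blast
  have Suc_card: "card (insert x G \<inter> Es i) = Suc (card (G \<inter> Es i))"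
    using x G(2) by (simp add: Int_insert_left)
  have "(\<forall>j\<in>{1..k}. card (insert x G \<inter> Es j) \<le> rs j) \<longleftrightarrow> card (G \<inter> Es i) < rs i"
  proof
    assume "\<forall>j\<in>{1..k}. card (insert x G \<inter> Es j) \<le> rs j"
    then show "card (G \<inter> Es i) < rs i" using x(3) Suc_card by fastforce
  next
    assume "card (G \<inter> Es i) < rs i"
    then show "\<forall>j\<in>{1..k}. card (insert x G \<inter> Es j) \<le> rs j"
      using G(1) Suc_card other unfolding partition_indep_def by (metis Suc_leI)
  qed
  then show ?thesis using G(1) x by (auto simp: partition_indep_def)
qed

lemma card_partition_indep:
  assumes "disjoint_family_on Es {1..k}" "partition_indep E k Es rs G" "finite G"
  shows "card G = (\<Sum>i\<in>{1..k}. card (G \<inter> Es i))"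
proof -
  have "G = (\<Union>i\<in>{1..k}. G \<inter> Es i)" using assms(2) by (auto simp: partition_indep_def)
  also have "card \<dots> = (\<Sum>i\<in>{1..k}. card (G \<inter> Es i))"
    using assms by (intro card_UN_disjoint) (auto simp: disjoint_family_on_def)
  finally show ?thesis .
qed

lemma card_greedy_partition_inter:
  assumes disj: "disjoint_family_on Es {1..k}" and i: "i \<in> {1..k}"
  shows "inj_on s {1..m} \<Longrightarrow> s ` {1..m} \<subseteq> E \<Longrightarrow>
    card (greedy (partition_indep E k Es rs) s m \<inter> Es i) = min (rs i) (card (s ` {1..m} \<inter> Es i))"
proof (induction m)
  case (Suc m)
  let ?P = "partition_indep E k Es rs"
  define G where "G = greedy ?P s m"
  define T where "T = s ` {1..m}"
  define x where "x = s (Suc m)"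
  have G': "greedy ?P s (Suc m) = (if ?P (insert x G) then insert x G else G)"
    by (simp add: G_def x_def Let_def)
  have T': "s ` {1..Suc m} = insert x T" by (auto simp: T_def x_def atLeastAtMostSuc_conv)
  have "x \<notin> T"
    using inj_on_image_mem_iff[OF Suc.prems(1), of "Suc m" "{1..m}"] by (simp add: T_def x_def)
  have "finite G" "G \<subseteq> T" using finite_subset greedy_subset_image[of ?P s m] by (auto simp: G_def T_def)
  have "inj_on s {1..m}" using Suc.prems(1) by (rule inj_on_subset) auto
  moreover have "s ` {1..m} \<subseteq> E" using Suc.prems(2) by (auto simp: T' T_def)
  ultimately have IH: "card (G \<inter> Es i) = min (rs i) (card (T \<inter> Es i))"
    using Suc.IH by (simp add: G_def T_def)
  show ?case
  proof (cases "x \<in> Es i")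
    case True
    have "?P G" unfolding G_def by (rule greedy_satisfies) (simp add: partition_indep_def)
    moreover have "x \<in> E" using Suc.prems(2) unfolding T' by simp
    moreover have "x \<notin> G" using \<open>x \<notin> T\<close> \<open>G \<subseteq> T\<close> by blast
    ultimately have "?P (insert x G) \<longleftrightarrow> card (G \<inter> Es i) < rs i"
      using partition_indep_insert_iff[OF disj _ \<open>finite G\<close> _ _ i True] by blast
    moreover have "card (insert x T \<inter> Es i) = Suc (card (T \<inter> Es i))"
      using True \<open>x \<notin> T\<close> by (simp add: T_def)
    moreover have "card (insert x G \<inter> Es i) = Suc (card (G \<inter> Es i))"
      using True \<open>x \<notin> G\<close> \<open>finite G\<close> by (simp add: Int_insert_left)
    ultimately show ?thesis unfolding G' T' using IH by auto
  next
    case False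
    then show ?thesis unfolding G' T' using IH by (simp add: Int_insert_left)
  qed
qed simp

lemma obtain_initial_segment:
  fixes k :: nat and Q :: "nat \<Rightarrow> bool"
  assumes down_closed: "\<And>i i'. 1 \<le> i \<Longrightarrow> i \<le> i' \<Longrightarrow> i' \<le> k \<Longrightarrow> Q i' \<Longrightarrow> Q i"
  obtains j where "j \<le> k" "\<And>i. i \<in> {1..k} \<Longrightarrow> Q i \<longleftrightarrow> i \<le> j"
proof
  define J where "J = insert 0 {i \<in> {1..k}. Q i}"
  have "finite J" by (simp add: J_def)
  show "Max J \<le> k" using \<open>finite J\<close> by (auto simp: J_def)
  fix i assume i: "i \<in> {1..k}"
  show "Q i \<longleftrightarrow> i \<le> Max J"
  proof
    assume "Q i"
    then show "i \<le> Max J" using \<open>finite J\<close> i by (auto simp: J_def)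
  next
    assume "i \<le> Max J"
    moreover have "Max J \<in> J" using \<open>finite J\<close> by (intro Max_in) (auto simp: J_def)
    ultimately show "Q i" using i down_closed[of i "Max J"] by (auto simp: J_def)
  qed
qed

lemma sum_min_initial_segment:
  fixes a b :: "nat \<Rightarrow> real"
  assumes "j \<le> k" and initial: "\<And>i. i \<in> {1..k} \<Longrightarrow> a i \<le> b i \<longleftrightarrow> i \<le> j"
  shows "(\<Sum>i\<in>{1..k}. min (a i) (b i)) = (\<Sum>i\<in>{1..j}. a i) + (\<Sum>i\<in>{j+1..k}. b i)"
proof -
  have "{1..k} = {1..j} \<union> {j+1..k}" using \<open>j \<le> k\<close> by auto
  then have "(\<Sum>i\<in>{1..k}. min (a i) (b i))
      = (\<Sum>i\<in>{1..j}. min (a i) (b i)) + (\<Sum>i\<in>{j+1..k}. min (a i) (b i))"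
    by (simp add: sum.union_disjoint)
  also have "\<dots> = (\<Sum>i\<in>{1..j}. a i) + (\<Sum>i\<in>{j+1..k}. b i)"
  proof (intro arg_cong2[where f = "(+)"] sum.cong refl)
    fix i assume "i \<in> {1..j}"
    with initial[of i] \<open>j \<le> k\<close> show "min (a i) (b i) = a i" by simp
  next
    fix i assume "i \<in> {j+1..k}"
    with initial[of i] show "min (a i) (b i) = b i" by simp
  qed
  finally show ?thesis .
qed

lemma F_diff_subset_UN_pm_ground:
  "j \<le> m \<Longrightarrow> F m - F j \<subseteq> (\<Union>l\<in>{j+1..m}. pm_ground F l)"
proof (induction m rule: dec_induct)
  case (step m)
  have "F (Suc m) - F j \<subseteq> pm_ground F (Suc m) \<union> (F m - F j)" by (auto simp: pm_ground_def)
  with step.IH step.hyps show ?case by (auto simp: atLeastAtMostSuc_conv)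
qed simp

text \<open>Deleting the loops leaves the independent sets unchanged (\<open>indep_del_loops\<close>), so the principal
  sequence of the loopless matroid is stated for \<open>indep\<close> itself.\<close>

locale principal_sequence = finite_matroid +
  fixes k :: nat and F :: "nat \<Rightarrow> 'a set" and lam :: "nat \<Rightarrow> real"
  assumes principal_seq: "principal_seq (E - loops E indep) indep k F lam"
begin

abbreviation principal_partition :: "'a set \<Rightarrow> bool" where
  "principal_partition \<equiv> partition_indep E k (pm_ground F) (pm_rank indep F)"

lemma F_0: "F 0 = {}"
  using principal_seq by (simp add: principal_seq_def)

lemma F_k: "F k = E - loops E indep"
  using principal_seq by (simp add: principal_seq_def)

lemma F_psubset_Suc: "i < k \<Longrightarrow> F i \<subset> F (Suc i)"
  using principal_seq by (simp add: principal_seq_def)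

lemma lam_Suc_less: "1 \<le> i \<Longrightarrow> i < k \<Longrightarrow> lam (Suc i) < lam i"
  using principal_seq by (simp add: principal_seq_def)

lemma F_minimizers:
  assumes "i \<in> {1..k}"
  shows "F (i - 1) \<in> minimizers (E - loops E indep) indep (lam i)"
    and "F i \<in> minimizers (E - loops E indep) indep (lam i)"
proof -
  have "\<forall>i\<in>{1..k}. F (i - 1) \<in> minimizers (E - loops E indep) indep (lam i)
      \<and> F i \<in> minimizers (E - loops E indep) indep (lam i)
      \<and> (\<forall>X\<in>minimizers (E - loops E indep) indep (lam i). F (i - 1) \<subseteq> X \<and> X \<subseteq> F i)"
    using principal_seq unfolding principal_seq_def by (elim conjE) assumption
  with assms show "F (i - 1) \<in> minimizers (E - loops E indep) indep (lam i)"
    and "F i \<in> minimizers (E - loops E indep) indep (lam i)" by auto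
qed

lemma F_mono: "i \<le> j \<Longrightarrow> j \<le> k \<Longrightarrow> F i \<subseteq> F j"
proof (induction j rule: dec_induct)
  case (step j)
  then show ?case using F_psubset_Suc[of j] by auto
qed simp

lemma lam_antimono:
  assumes "1 \<le> i" "i \<le> j" "j \<le> k"
  shows "lam j \<le> lam i"
  using assms(2,3)
proof (induction j rule: dec_induct)
  case (step j)
  then show ?case using lam_Suc_less[of j] assms(1) by auto
qed simp

lemma F_subset: "i \<le> k \<Longrightarrow> F i \<subseteq> E - loops E indep"
  using F_mono[of i k] F_k by simp

lemma pm_ground_subset: "i \<in> {1..k} \<Longrightarrow> pm_ground F i \<subseteq> E"
  using F_subset[of i] by (auto simp: pm_ground_def)

lemma disjoint_pm_ground: "disjoint_family_on (pm_ground F) {1..k}"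
proof -
  have "pm_ground F i \<inter> pm_ground F j = {}" if "i \<in> {1..k}" "j \<in> {1..k}" "i < j" for i j
  proof -
    have "F i \<subseteq> F (j - 1)" using that by (intro F_mono) auto
    then show ?thesis by (auto simp: pm_ground_def)
  qed
  then show ?thesis unfolding disjoint_family_on_def by (metis Int_commute linorder_neqE_nat)
qed

lemma pm_rank_eq: "i \<in> {1..k} \<Longrightarrow> pm_rank indep F i = mrank indep (F i) - mrank indep (F (i - 1))"
  using F_mono[of "i - 1" i] by (auto simp: pm_rank_def contr_rank_def pm_ground_def Un_absorb2)

lemma mrank_F_eq_sum_pm_rank: "j \<le> k \<Longrightarrow> real (mrank indep (F j)) = (\<Sum>i\<in>{1..j}. real (pm_rank indep F i))"
proof (induction j)
  case 0
  then show ?case using F_0 mrank_empty by simp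
next
  case (Suc j)
  have "mrank indep (F j) \<le> mrank indep (F (Suc j))" using F_mono[of j "Suc j"] Suc.prems mrank_mono by simp
  then show ?case using Suc pm_rank_eq[of "Suc j"] by (simp add: of_nat_diff)
qed

text \<open>\<open>F (i - 1)\<close> and \<open>F i\<close> both minimise \<open>lam i * r X - |X|\<close>, so \<open>lam i\<close> is the density
  \<open>|E i| / r i\<close> of the \<open>i\<close>-th principal minor.\<close>

lemma card_pm_ground_eq:
  assumes i: "i \<in> {1..k}"
  shows "real (card (pm_ground F i)) = lam i * real (pm_rank indep F i)"
proof -
  have "F (i - 1) \<subseteq> F i" "F i \<subseteq> E - loops E indep" "F (i - 1) \<subseteq> E - loops E indep"
    using i F_mono[of "i - 1" i] F_subset[of i] F_subset[of "i - 1"] by auto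
  then have "fval indep (lam i) (F (i - 1)) \<le> fval indep (lam i) (F i)"
    "fval indep (lam i) (F i) \<le> fval indep (lam i) (F (i - 1))"
    using F_minimizers[OF i] by (simp_all add: minimizers_def)
  then have "fval indep (lam i) (F i) = fval indep (lam i) (F (i - 1))" by simp
  moreover have "real (card (pm_ground F i)) = real (card (F i)) - real (card (F (i - 1)))"
    using \<open>F (i - 1) \<subseteq> F i\<close> \<open>F i \<subseteq> E - loops E indep\<close> finite_subset[OF _ finite_ground]
    by (simp add: pm_ground_def card_Diff_subset of_nat_diff card_mono finite_subset)
  moreover have "real (pm_rank indep F i) = real (mrank indep (F i)) - real (mrank indep (F (i - 1)))"
    using pm_rank_eq[OF i] mrank_mono[OF \<open>F (i - 1) \<subseteq> F i\<close>] by (simp add: of_nat_diff)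
  then have "lam i * real (pm_rank indep F i)
      = lam i * real (mrank indep (F i)) - lam i * real (mrank indep (F (i - 1)))"
    by (simp add: right_diff_distrib)
  ultimately show ?thesis unfolding fval_def by linarith
qed

lemma pm_rank_pos:
  assumes i: "i \<in> {1..k}"
  shows "1 \<le> pm_rank indep F i"
proof -
  have "i - 1 < k" using i by auto
  then have "F (i - 1) \<subset> F i" using i F_psubset_Suc[of "i - 1"] by simp
  moreover have "finite (F i)" using F_subset[of i] i finite_subset[OF _ finite_ground] by auto
  ultimately have "card (pm_ground F i) \<noteq> 0" by (auto simp: pm_ground_def)
  then show ?thesis using card_pm_ground_eq[OF i] by (cases "pm_rank indep F i") auto
qed

end

lemma card_image_comp_prefix_inter:
  fixes e :: "nat \<Rightarrow> 'a"
  assumes "inj_on e {1..n}" "\<sigma> ` {1..m} \<subseteq> {1..n}"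
  shows "card ((e \<circ> \<sigma>) ` {1..m} \<inter> A) = card (\<sigma> ` {1..m} \<inter> ({1..n} \<inter> e -` A))"
proof -
  have "(e \<circ> \<sigma>) ` {1..m} \<inter> A = e ` (\<sigma> ` {1..m} \<inter> ({1..n} \<inter> e -` A))"
    using assms(2) by (auto simp: image_comp[symmetric])
  moreover have "inj_on e (\<sigma> ` {1..m} \<inter> ({1..n} \<inter> e -` A))"
    by (rule inj_on_subset[OF assms(1)]) (use assms(2) in blast)
  ultimately show ?thesis by (simp add: card_image)
qed
lemma card_vimage_bij_betw:
  fixes e :: "nat \<Rightarrow> 'a"
  assumes "bij_betw e {1..n} E" "A \<subseteq> E"
  shows "card ({1..n} \<inter> e -` A) = card A"
proof -
  have "inj_on e ({1..n} \<inter> e -` A)"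
    using assms(1) inj_on_subset[OF _ Int_lower1] by (auto simp: bij_betw_def)
  then have "card (e ` ({1..n} \<inter> e -` A)) = card ({1..n} \<inter> e -` A)" by (rule card_image)
  moreover have "e ` ({1..n} \<inter> e -` A) = A" using assms by (auto simp: bij_betw_def)
  ultimately show ?thesis by simp
qed

context principal_sequence
begin

lemma pm_rank_le_iff:
  assumes "i \<in> {1..k}"
  shows "real (pm_rank indep F i) \<le> p * real (card (pm_ground F i)) \<longleftrightarrow> 1 \<le> p * lam i"
proof -
  have "0 < real (pm_rank indep F i)" using pm_rank_pos[OF assms] by simp
  then show ?thesis
    using mult_le_cancel_left_pos[of "real (pm_rank indep F i)" 1 "p * lam i"]
    by (simp add: card_pm_ground_eq[OF assms] mult_ac)
qed

context
  fixes n :: nat and e :: "nat \<Rightarrow> 'a"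
  assumes enum: "bij_betw e {1..n} E"
begin

lemma inj_enum: "inj_on e {1..n}"
  using enum by (simp add: bij_betw_def)

lemma enum_comp_prefix:
  assumes "\<sigma> permutes {1..n}" "m \<le> n"
  shows "inj_on (e \<circ> \<sigma>) {1..m}" "(e \<circ> \<sigma>) ` {1..m} \<subseteq> E"
proof -
  have "\<sigma> ` {1..m} \<subseteq> {1..n}" using permutes_prefix_image[OF assms] by simp
  then show "(e \<circ> \<sigma>) ` {1..m} \<subseteq> E" using enum by (auto simp: bij_betw_def)
  show "inj_on (e \<circ> \<sigma>) {1..m}"
    using permutes_inj_on[OF assms(1)] inj_on_subset[OF inj_enum \<open>\<sigma> ` {1..m} \<subseteq> {1..n}\<close>]
    by (rule comp_inj_on)
qed

lemma card_greedy_principal_partition: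
  assumes "\<sigma> permutes {1..n}" "m \<le> n"
  shows "card (greedy principal_partition (e \<circ> \<sigma>) m)
    = (\<Sum>i\<in>{1..k}. min (pm_rank indep F i) (card (\<sigma> ` {1..m} \<inter> ({1..n} \<inter> e -` pm_ground F i))))"
proof -
  let ?G = "greedy principal_partition (e \<circ> \<sigma>) m"
  have "principal_partition ?G" by (rule greedy_satisfies) (simp add: partition_indep_def)
  moreover have "finite ?G" using finite_subset[OF greedy_subset_image] by simp
  ultimately have "card ?G = (\<Sum>i\<in>{1..k}. card (?G \<inter> pm_ground F i))"
    by (rule card_partition_indep[OF disjoint_pm_ground])
  also have "\<dots> = (\<Sum>i\<in>{1..k}. min (pm_rank indep F i) (card ((e \<circ> \<sigma>) ` {1..m} \<inter> pm_ground F i)))"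
    using card_greedy_partition_inter[OF disjoint_pm_ground _ enum_comp_prefix[OF assms]] by simp
  finally show ?thesis
    by (simp only: card_image_comp_prefix_inter[OF inj_enum permutes_prefix_image(1)[OF assms]])
qed

lemma card_greedy_le_mrank_add_card:
  assumes "\<sigma> permutes {1..n}" "m \<le> n" "j \<le> k"
  shows "card (greedy indep (e \<circ> \<sigma>) m)
    \<le> mrank indep (F j) + (\<Sum>i\<in>{j+1..k}. card (\<sigma> ` {1..m} \<inter> ({1..n} \<inter> e -` pm_ground F i)))"
proof -
  let ?T = "(e \<circ> \<sigma>) ` {1..m}"
  have "?T - loops E indep - F j \<subseteq> F k - F j" using enum_comp_prefix[OF assms(1,2)] F_k by auto
  also have "\<dots> \<subseteq> (\<Union>i\<in>{j+1..k}. pm_ground F i)" by (rule F_diff_subset_UN_pm_ground[OF assms(3)])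
  finally have "?T - loops E indep - F j \<subseteq> (\<Union>i\<in>{j+1..k}. ?T \<inter> pm_ground F i)" by blast
  then have "card (?T - loops E indep - F j) \<le> card (\<Union>i\<in>{j+1..k}. ?T \<inter> pm_ground F i)"
    by (intro card_mono) auto
  also have "\<dots> \<le> (\<Sum>i\<in>{j+1..k}. card (?T \<inter> pm_ground F i))" by (rule card_UN_le) simp
  finally have "card (?T - loops E indep - F j) \<le> (\<Sum>i\<in>{j+1..k}. card (?T \<inter> pm_ground F i))" .
  moreover have "card (greedy indep (e \<circ> \<sigma>) m) \<le> mrank indep (F j) + card (?T - loops E indep - F j)"
    using card_greedy_eq_mrank mrank_diff_loops mrank_le_mrank_add_card_diff[of "?T - loops E indep"]
    by simp
  ultimately show ?thesis
    unfolding card_image_comp_prefix_inter[OF inj_enum permutes_prefix_image(1)[OF assms(1,2)]] by linarith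
qed

lemma sum_perms_card_greedy_principal_partition_ge:
  assumes "m \<le> n"
  shows "(1 - exp (-1)) * real (card (perms_upto n)) *
      (\<Sum>i\<in>{1..k}. min (real (pm_rank indep F i)) (real m / real n * real (card (pm_ground F i))))
    \<le> (\<Sum>\<sigma>\<in>perms_upto n. real (card (greedy principal_partition (e \<circ> \<sigma>) m)))"
proof -
  define P where "P = real (card (perms_upto n))"
  define p where "p = real m / real n"
  define pos where "pos i = {1..n} \<inter> e -` pm_ground F i" for i
  have "0 \<le> p" "p \<le> 1" using assms by (auto simp: p_def divide_le_eq_1)
  have "(1 - exp (-1)) * P * min (real (pm_rank indep F i)) (p * real (card (pm_ground F i)))
      \<le> (\<Sum>\<sigma>\<in>perms_upto n. real (min (pm_rank indep F i) (card (\<sigma> ` {1..m} \<inter> pos i))))"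
    if i: "i \<in> {1..k}" for i
  proof -
    have "card (pos i) = card (pm_ground F i)"
      using card_vimage_bij_betw[OF enum pm_ground_subset[OF i]] by (simp add: pos_def)
    have "(1 - exp (-1)) * min (real (pm_rank indep F i)) (p * real (card (pm_ground F i)))
        \<le> real (pm_rank indep F i) * (1 - (1 - p / real (pm_rank indep F i)) ^ card (pos i))"
      using one_minus_exp_mult_min_le_power pm_rank_pos[OF i] \<open>0 \<le> p\<close> \<open>p \<le> 1\<close> \<open>card (pos i) = _\<close>
      by simp
    from mult_left_mono[OF this, of P]
    show ?thesis
      using sum_perms_upto_min_card_prefix_inter_ge[of "pos i" n m "pm_rank indep F i"]
        assms pm_rank_pos[OF i]
      by (simp add: P_def p_def pos_def mult_ac)
  qed
  then have "(1 - exp (-1)) * P * (\<Sum>i\<in>{1..k}. min (real (pm_rank indep F i)) (p * real (card (pm_ground F i))))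
      \<le> (\<Sum>i\<in>{1..k}. \<Sum>\<sigma>\<in>perms_upto n. real (min (pm_rank indep F i) (card (\<sigma> ` {1..m} \<inter> pos i))))"
    unfolding sum_distrib_left by (intro sum_mono) auto
  also have "\<dots> = (\<Sum>\<sigma>\<in>perms_upto n. \<Sum>i\<in>{1..k}. real (min (pm_rank indep F i) (card (\<sigma> ` {1..m} \<inter> pos i))))"
    by (rule sum.swap)
  also have "\<dots> = (\<Sum>\<sigma>\<in>perms_upto n. real (card (greedy principal_partition (e \<circ> \<sigma>) m)))"
    by (intro sum.cong refl) (simp add: card_greedy_principal_partition assms pos_def)
  finally show ?thesis by (simp add: P_def p_def)
qed

lemma sum_perms_card_greedy_le:
  assumes "m \<le> n"
  shows "(\<Sum>\<sigma>\<in>perms_upto n. real (card (greedy indep (e \<circ> \<sigma>) m)))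
    \<le> real (card (perms_upto n)) *
      (\<Sum>i\<in>{1..k}. min (real (pm_rank indep F i)) (real m / real n * real (card (pm_ground F i))))"
proof -
  define P where "P = real (card (perms_upto n))"
  define p where "p = real m / real n"
  define R where "R i = real (pm_rank indep F i)" for i
  define K where "K i = real (card (pm_ground F i))" for i
  have "0 \<le> p" by (simp add: p_def)
  have "R i \<le> p * K i" if "1 \<le> i" "i \<le> i'" "i' \<le> k" "R i' \<le> p * K i'" for i i'
  proof -
    have "1 \<le> p * lam i'" using that pm_rank_le_iff[of i'] by (simp add: R_def K_def)
    also have "\<dots> \<le> p * lam i" using lam_antimono[OF that(1-3)] \<open>0 \<le> p\<close> by (rule mult_left_mono)
    finally show ?thesis using that pm_rank_le_iff[of i] by (simp add: R_def K_def)
  qed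
  then obtain j where "j \<le> k" and j: "\<And>i. i \<in> {1..k} \<Longrightarrow> R i \<le> p * K i \<longleftrightarrow> i \<le> j"
    by (rule obtain_initial_segment) auto
  have "(\<Sum>\<sigma>\<in>perms_upto n. real (card (greedy indep (e \<circ> \<sigma>) m)))
      \<le> (\<Sum>\<sigma>\<in>perms_upto n. real (mrank indep (F j))
          + (\<Sum>i\<in>{j+1..k}. real (card (\<sigma> ` {1..m} \<inter> ({1..n} \<inter> e -` pm_ground F i)))))"
    using card_greedy_le_mrank_add_card[OF _ assms \<open>j \<le> k\<close>]
    by (intro sum_mono) (simp flip: of_nat_sum of_nat_add)
  also have "\<dots> = P * real (mrank indep (F j))
      + (\<Sum>i\<in>{j+1..k}. \<Sum>\<sigma>\<in>perms_upto n. real (card (\<sigma> ` {1..m} \<inter> ({1..n} \<inter> e -` pm_ground F i))))"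
    by (simp add: sum.distrib P_def) (rule sum.swap)
  also have "\<dots> = P * (\<Sum>i\<in>{1..j}. R i) + (\<Sum>i\<in>{j+1..k}. P * (p * K i))"
  proof -
    have "(\<Sum>\<sigma>\<in>perms_upto n. real (card (\<sigma> ` {1..m} \<inter> ({1..n} \<inter> e -` pm_ground F i)))) = P * (p * K i)"
      if "i \<in> {j+1..k}" for i
      using sum_perms_upto_card_prefix_inter[of "{1..n} \<inter> e -` pm_ground F i" n m] assms
        card_vimage_bij_betw[OF enum pm_ground_subset, of i] that
      by (simp add: P_def p_def K_def)
    then show ?thesis using mrank_F_eq_sum_pm_rank[OF \<open>j \<le> k\<close>] by (simp add: R_def)
  qed
  also have "\<dots> = P * (\<Sum>i\<in>{1..k}. min (R i) (p * K i))"
    using sum_min_initial_segment[of j k R "\<lambda>i. p * K i", OF \<open>j \<le> k\<close> j]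
    by (simp add: distrib_left sum_distrib_left)
  finally show ?thesis by (simp add: P_def p_def R_def K_def)
qed

lemma sum_perms_card_greedy_prefix_ratio:
  assumes "m \<le> n"
  shows "(1 - exp (-1)) * (\<Sum>\<sigma>\<in>perms_upto n. real (card (greedy indep (e \<circ> \<sigma>) m)))
    \<le> (\<Sum>\<sigma>\<in>perms_upto n. real (card (greedy principal_partition (e \<circ> \<sigma>) m)))"
proof -
  have "0 \<le> 1 - exp (-1::real)" by simp
  from mult_left_mono[OF sum_perms_card_greedy_le[OF assms] this]
  have "(1 - exp (-1)) * (\<Sum>\<sigma>\<in>perms_upto n. real (card (greedy indep (e \<circ> \<sigma>) m)))
    \<le> (1 - exp (-1)) * real (card (perms_upto n)) *
      (\<Sum>i\<in>{1..k}. min (real (pm_rank indep F i)) (real m / real n * real (card (pm_ground F i))))"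
    by (simp only: mult.assoc)
  also have "\<dots> \<le> (\<Sum>\<sigma>\<in>perms_upto n. real (card (greedy principal_partition (e \<circ> \<sigma>) m)))"
    by (rule sum_perms_card_greedy_principal_partition_ge[OF assms])
  finally show ?thesis .
qed

end

end

lemma sum_perms_upto_setw_greedy:
  assumes "inj_on e {1..n}"
  shows "(\<Sum>\<sigma>\<in>perms_upto n. setw n w e \<sigma> (greedy P (e \<circ> \<sigma>) n))
    = (\<Sum>i\<in>{1..n}. w i * ((\<Sum>\<sigma>\<in>perms_upto n. real (card (greedy P (e \<circ> \<sigma>) i)))
                          - (\<Sum>\<sigma>\<in>perms_upto n. real (card (greedy P (e \<circ> \<sigma>) (i - 1))))))"
proof -
  have "(\<Sum>\<sigma>\<in>perms_upto n. setw n w e \<sigma> (greedy P (e \<circ> \<sigma>) n))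
      = (\<Sum>\<sigma>\<in>perms_upto n. \<Sum>i\<in>{1..n}.
           w i * (real (card (greedy P (e \<circ> \<sigma>) i)) - real (card (greedy P (e \<circ> \<sigma>) (i - 1)))))"
    using setw_greedy_eq_sum_increments[OF _ assms] by (intro sum.cong) auto
  also have "\<dots> = (\<Sum>i\<in>{1..n}. \<Sum>\<sigma>\<in>perms_upto n.
           w i * (real (card (greedy P (e \<circ> \<sigma>) i)) - real (card (greedy P (e \<circ> \<sigma>) (i - 1)))))"
    by (rule sum.swap)
  finally show ?thesis by (simp add: sum_distrib_left[symmetric] sum_subtractf)
qed

theorem lemma6:
  fixes E :: "'a set" and indep :: "'a set \<Rightarrow> bool" and n :: nat
    and e :: "nat \<Rightarrow> 'a" and w :: "nat \<Rightarrow> real"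
    and k :: nat and F :: "nat \<Rightarrow> 'a set" and lam :: "nat \<Rightarrow> real"
  assumes "matroid E indep"
    and "bij_betw e {1..n} E"
    and "principal_seq (E - loops E indep) (indep_del indep (loops E indep)) k F lam"
    and "\<forall>i j. 1 \<le> i \<and> i \<le> j \<and> j \<le> n \<longrightarrow> w j \<le> w i"
    and "\<forall>i\<in>{1..n}. 0 \<le> w i"
  shows "measure_pmf.expectation (pmf_of_set {\<sigma>. \<sigma> permutes {1..n}})
           (\<lambda>\<sigma>. setw n w e \<sigma>
              (greedy (partition_indep E k (pm_ground F)
                         (pm_rank (indep_del indep (loops E indep)) F)) (e \<circ> \<sigma>) n))
         \<ge> (1 - exp (-1)) *
           measure_pmf.expectation (pmf_of_set {\<sigma>. \<sigma> permutes {1..n}})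
           (\<lambda>\<sigma>. setw n w e \<sigma> (greedy indep (e \<circ> \<sigma>) n))"
proof -
  interpret finite_matroid E indep by (rule finite_matroid.intro) (fact assms(1))
  interpret principal_sequence E indep k F lam
    using assms(3) by unfold_locales (simp add: indep_del_loops)
  define count where "count P i = (\<Sum>\<sigma>\<in>perms_upto n. real (card (greedy P (e \<circ> \<sigma>) i)))"
    for P :: "'a set \<Rightarrow> bool" and i
  have inj: "inj_on e {1..n}" using assms(2) by (simp add: bij_betw_def)
  have "(1 - exp (-1)) * (\<Sum>\<sigma>\<in>perms_upto n. setw n w e \<sigma> (greedy indep (e \<circ> \<sigma>) n))
      \<le> (\<Sum>\<sigma>\<in>perms_upto n. setw n w e \<sigma> (greedy principal_partition (e \<circ> \<sigma>) n))"
    unfolding sum_perms_upto_setw_greedy[OF inj] count_def[symmetric]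
  proof (rule sum_antimono_weights_increments_mono)
    show "(1 - exp (-1)) * count indep m \<le> count principal_partition m" if "m \<in> {1..n}" for m
      using sum_perms_card_greedy_prefix_ratio[OF assms(2)] that by (simp add: count_def)
  qed (use assms(4,5) in \<open>auto simp: count_def\<close>)
  then have "(1 - exp (-1)) * (\<Sum>\<sigma>\<in>perms_upto n. setw n w e \<sigma> (greedy indep (e \<circ> \<sigma>) n))
        / real (card (perms_upto n))
      \<le> (\<Sum>\<sigma>\<in>perms_upto n. setw n w e \<sigma> (greedy principal_partition (e \<circ> \<sigma>) n))
        / real (card (perms_upto n))"
    by (rule divide_right_mono) simp
  then show ?thesis
    unfolding integral_pmf_of_set[OF perms_upto_nonempty finite_perms_upto] indep_del_loops by simp
qed

end
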